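(* For $k\in\mathbb{N}$ let $I_k=[2^{-(k+1)},2^{-k}]$ and $\phi_{I_k}$ as defined below. Then the closure of $\mathrm{span}\{\phi_{I_k}:k\in\mathbb{N}\}$ in $K([0,1])$ with respect to the Alexiewicz norm is contained in $\mathcal{J}\cup\{0\}$, where $\mathcal{J}$ is the set of Kurzweil integrable functions on $[0,1]$ which are not Lebesgue integrable. In particular, $\mathcal{J}$ is spaceable in $K([0,1])$.
   Context: Kurzweil integral means the Henstock–Kurzweil integral. $K([0,1])$ is the vector space of Kurzweil integrable functions on $[0,1]$ (modulo a.e. equality), with the Alexiewicz norm $\|f\|_A=\sup_{x\in[0,1]}|F(x)|$ where $F(x)=\int_0^x f$ (Kurzweil integral). Define $\Phi:[0,1]\to\mathbb{R}$ by $\Phi(x)=4x^2\sin\left(\frac{\pi}{4x^2}\right)$ for $x\in(0,1/2]$, $\Phi(x)=-4(1-x)^2\sin\left(\frac{\pi}{4(1-x)^2}\right)$ for $x\in(1/2,1)$, $\Phi(0)=\Phi(1)=0$. For $I=[a,b]\subset[0,1]$, $\Phi_I(x)=\Phi\left(\frac{x-a}{b-a}\right)$ for $x\in I$ and $0$ otherwise, and $\phi_I=\Phi_I'$, i.e. $\phi_I(x)=\frac{1}{b-a}\Phi'\left(\frac{x-a}{b-a}\right)$ for $x\in I$ and $0$ otherwise. A subset $S$ of a topological vector space $X$ is spaceable if $S\cup\{0\}$ contains a closed infinite-dimensional subspace of $X$. *)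

theory Defs
  imports "HOL-Analysis.Analysis"
begin

definition Phi :: "real \<Rightarrow> real" where
  "Phi x = (if 0 < x \<and> x \<le> 1/2 then 4 * x^2 * sin (pi / (4 * x^2))
            else if 1/2 < x \<and> x < 1 then - 4 * (1 - x)^2 * sin (pi / (4 * (1 - x)^2))
            else 0)"

definition phiI :: "real \<Rightarrow> real \<Rightarrow> real \<Rightarrow> real" where
  "phiI a b x = (if x \<in> {a..b} then deriv Phi ((x - a) / (b - a)) / (b - a) else 0)"

definition Ik_lo :: "nat \<Rightarrow> real" where "Ik_lo k = (1/2) ^ (k + 1)"
definition Ik_hi :: "nat \<Rightarrow> real" where "Ik_hi k = (1/2) ^ k"

definition alex_norm :: "(real \<Rightarrow> real) \<Rightarrow> real" where
  "alex_norm f = (SUP x\<in>{0..1}. \<bar>integral {0..x} f\<bar>)"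

definition KJ :: "(real \<Rightarrow> real) \<Rightarrow> bool" where
  "KJ f \<longleftrightarrow> f integrable_on {0..1} \<and> \<not> set_integrable lebesgue {0..1} f"

text \<open>The zero element of K([0,1]) (modulo a.e. equality).\<close>
definition K_zero :: "(real \<Rightarrow> real) \<Rightarrow> bool" where
  "K_zero f \<longleftrightarrow> (AE x in lebesgue. x \<in> {0..1} \<longrightarrow> f x = 0)"

text \<open>Spaceability in K([0,1]) of a set S (given as a predicate on representatives):
  there is a set V of representatives forming a linear subspace, closed in the Alexiewicz
  (semi)norm (hence also saturated under a.e. equality), infinite-dimensional modulo
  null functions, whose every element lies in S or is the zero of K([0,1]).\<close>
definition spaceable_K :: "((real \<Rightarrow> real) \<Rightarrow> bool) \<Rightarrow> bool" where
  "spaceable_K S \<longleftrightarrow> (\<exists>V :: (real \<Rightarrow> real) set.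
      (\<forall>f\<in>V. f integrable_on {0..1}) \<and>
      (\<lambda>x. 0) \<in> V \<and>
      (\<forall>f\<in>V. \<forall>g\<in>V. (\<lambda>x. f x + g x) \<in> V) \<and>
      (\<forall>f\<in>V. \<forall>c::real. (\<lambda>x. c * f x) \<in> V) \<and>
      (\<forall>f. f integrable_on {0..1} \<and> (\<forall>e>0. \<exists>g\<in>V. alex_norm (\<lambda>x. f x - g x) < e)
            \<longrightarrow> f \<in> V) \<and>
      (\<forall>n. \<exists>fs :: nat \<Rightarrow> real \<Rightarrow> real. (\<forall>i<n. fs i \<in> V) \<and>
            (\<forall>c :: nat \<Rightarrow> real. K_zero (\<lambda>x. \<Sum>i<n. c i * fs i x) \<longrightarrow> (\<forall>i<n. c i = 0))) \<and>
      (\<forall>f\<in>V. S f \<or> K_zero f))"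

end

theory Submission
  imports Defs
begin

(* On each I_k, the primitive of every element of the closure is a constant multiple
   d_k * Phi_{I_k}: this holds for finite combinations of the phi_{I_k}, whose primitives have
   essentially disjoint supports, and the multiples of a fixed function are closed under uniform
   limits.  Between consecutive points where pi/(4x^2) = (n + 3/2) pi, Phi jumps by more than
   1/(n+1), so Phi_{I_k} has unbounded variation, whereas the primitive of a Lebesgue integrable
   function has bounded variation.  Hence for Lebesgue integrable f all d_k vanish, the primitive
   vanishes on (0,1], the union of the I_k, and f = 0 a.e.  The phi_{I_k} are independent because
   the primitive of a combination, at a point of I_k where Phi_{I_k} is nonzero, only sees the
   k-th coefficient. *)

lemma has_real_derivative_0_if_quadratic_bound:
  fixes g :: "real \<Rightarrow> real"
  assumes "g x = 0" and "\<And>h. \<bar>g (x + h)\<bar> \<le> C * h\<^sup>2"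
  shows "(g has_real_derivative 0) (at x)"
  unfolding DERIV_def
proof (rule Lim_null_comparison)
  have bound: "\<bar>(g (x + h) - g x) / h\<bar> \<le> C * \<bar>h\<bar>" if "h \<noteq> 0" for h
  proof -
    have "\<bar>(g (x + h) - g x) / h\<bar> = \<bar>g (x + h)\<bar> / \<bar>h\<bar>"
      using assms(1) by (simp add: abs_divide)
    also have "\<dots> \<le> C * h\<^sup>2 / \<bar>h\<bar>"
      using assms(2) by (simp add: divide_right_mono)
    also have "\<dots> = C * \<bar>h\<bar>"
      using that by (simp add: power2_eq_square abs_mult_self_eq field_simps)
    finally show ?thesis .
  qed
  show "\<forall>\<^sub>F h in at 0. norm ((g (x + h) - g x) / h) \<le> C * \<bar>h\<bar>"
    unfolding eventually_at_filter by (rule always_eventually) (use bound in \<open>simp add: abs_divide\<close>)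
  show "((\<lambda>h. C * \<bar>h\<bar>) \<longlongrightarrow> 0) (at (0::real))"
    by (auto intro!: tendsto_eq_intros)
qed

lemma has_real_derivative_at_split:
  fixes f :: "real \<Rightarrow> real"
  assumes "(f has_real_derivative D) (at x within {..x})"
    and "(f has_real_derivative D) (at x within {x..})"
  shows "(f has_real_derivative D) (at x)"
proof -
  have "((\<lambda>y. (f y - f x) / (y - x)) \<longlongrightarrow> D) (at x within {..x} \<union> {x..})"
    using assms unfolding has_field_derivative_iff Lim_within_Un ..
  moreover have "{..x} \<union> {x..} = UNIV" by auto
  ultimately show ?thesis by (simp add: has_field_derivative_iff)
qed

definition chirp :: "real \<Rightarrow> real" where
  "chirp x = 4 * x\<^sup>2 * sin (pi / (4 * x\<^sup>2))"

definition chirp' :: "real \<Rightarrow> real" where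
  "chirp' x = 8 * x * sin (pi / (4 * x\<^sup>2)) - 2 * pi / x * cos (pi / (4 * x\<^sup>2))"

lemma chirp_has_real_derivative: "x \<noteq> 0 \<Longrightarrow> (chirp has_real_derivative chirp' x) (at x)"
  unfolding chirp_def chirp'_def
  by (rule derivative_eq_intros refl | simp)+
     (simp add: field_simps power2_eq_square power3_eq_cube power4_eq_xxxx)

lemma chirp_half: "chirp (1/2) = 0"
  by (simp add: chirp_def power2_eq_square)

lemma chirp'_half: "chirp' (1/2) = 4 * pi"
  by (simp add: chirp'_def power2_eq_square)

lemma chirp_reflect_has_real_derivative:
  assumes "x \<noteq> 1"
  shows "((\<lambda>y. - chirp (1 - y)) has_real_derivative chirp' (1 - x)) (at x)"
proof -
  have "((\<lambda>y. 1 - y) has_real_derivative -1) (at x)"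
    by (auto intro!: derivative_eq_intros)
  from DERIV_minus[OF DERIV_chain2[OF chirp_has_real_derivative this]] assms show ?thesis
    by simp
qed

lemma Phi_eq_chirp: "0 < x \<Longrightarrow> x \<le> 1/2 \<Longrightarrow> Phi x = chirp x"
  by (simp add: Phi_def chirp_def)

lemma Phi_half: "Phi (1/2) = 0"
  by (simp add: Phi_def power2_eq_square)

lemma Phi_eq_neg_chirp_reflect: "1/2 \<le> x \<Longrightarrow> x < 1 \<Longrightarrow> Phi x = - chirp (1 - x)"
proof (cases "x = 1/2")
  case True
  show ?thesis unfolding True using Phi_half chirp_half by simp
qed (simp add: Phi_def chirp_def)

lemma Phi_eq_0: "x \<le> 0 \<or> 1 \<le> x \<Longrightarrow> Phi x = 0"
  by (auto simp: Phi_def)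

lemma Phi_reflect: "Phi (1 - x) = - Phi x"
proof (cases "x = 1/2")
  case True
  show ?thesis unfolding True using Phi_half by simp
qed (auto simp: Phi_def)

lemma abs_Phi_le_sq: "\<bar>Phi x\<bar> \<le> 4 * x\<^sup>2"
proof (cases "0 < x \<and> x \<le> 1/2")
  case True
  then show ?thesis
    using abs_sin_le_one[of "pi / (4 * x\<^sup>2)"] by (simp add: Phi_def abs_mult mult_left_le)
next
  case outside: False
  show ?thesis
  proof (cases "1/2 < x \<and> x < 1")
    case True
    have "\<bar>Phi x\<bar> = 4 * (1 - x)\<^sup>2 * \<bar>sin (pi / (4 * (1 - x)\<^sup>2))\<bar>"
      using True by (simp add: Phi_def abs_mult)
    also have "\<dots> \<le> 4 * (1 - x)\<^sup>2"
      using abs_sin_le_one by (simp add: mult_left_le)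
    also have "\<dots> \<le> 4 * x\<^sup>2"
      using True by (intro mult_left_mono power_mono) auto
    finally show ?thesis .
  qed (use outside Phi_eq_0 in auto)
qed

lemma abs_Phi_le_sq_reflect: "\<bar>Phi x\<bar> \<le> 4 * (1 - x)\<^sup>2"
  using abs_Phi_le_sq[of "1 - x"] by (simp add: Phi_reflect)

lemma Phi_has_real_derivative_half: "(Phi has_real_derivative 4 * pi) (at (1/2))"
proof (rule has_real_derivative_at_split)
  have "(chirp has_real_derivative 4 * pi) (at (1/2) within {..1/2})"
    using chirp_has_real_derivative[of "1/2"] chirp'_half by (simp add: has_field_derivative_at_within)
  then show "(Phi has_real_derivative 4 * pi) (at (1/2) within {..1/2})"
  proof (rule has_field_derivative_transform_within[where d="1/2"])
    fix y :: real assume "y \<in> {..1/2}" "dist y (1/2) < 1/2"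
    then show "chirp y = Phi y" by (simp add: dist_real_def Phi_eq_chirp)
  qed auto
  have "((\<lambda>y. - chirp (1 - y)) has_real_derivative 4 * pi) (at (1/2) within {1/2..})"
    using chirp_reflect_has_real_derivative[of "1/2"] chirp'_half by (simp add: has_field_derivative_at_within)
  then show "(Phi has_real_derivative 4 * pi) (at (1/2) within {1/2..})"
  proof (rule has_field_derivative_transform_within[where d="1/2"])
    fix y :: real assume "y \<in> {1/2..}" "dist y (1/2) < 1/2"
    then show "- chirp (1 - y) = Phi y" by (simp add: dist_real_def Phi_eq_neg_chirp_reflect)
  qed auto
qed

lemma Phi_has_real_derivative_outside:
  assumes "x < 0 \<or> 1 < x"
  shows "(Phi has_real_derivative 0) (at x)"
  by (rule has_field_derivative_transform_within_open[where S = "{..<0} \<union> {1<..}", of "\<lambda>_. 0"])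
     (use assms Phi_eq_0 in auto)

lemma Phi_has_real_derivative_endpoints:
  assumes "x = 0 \<or> x = 1"
  shows "(Phi has_real_derivative 0) (at x)"
  using assms
proof
  assume "x = 0"
  then show ?thesis
    using Phi_eq_0 abs_Phi_le_sq by (intro has_real_derivative_0_if_quadratic_bound) auto
next
  assume "x = 1"
  then show ?thesis
    using Phi_eq_0 abs_Phi_le_sq_reflect[of "1 + _"] by (intro has_real_derivative_0_if_quadratic_bound) auto
qed

lemma Phi_differentiable: "Phi differentiable at x"
proof -
  consider "x < 0 \<or> 1 < x" | "x = 0 \<or> x = 1" | "0 < x" "x < 1/2" | "x = 1/2" | "1/2 < x" "x < 1"
    by linarith
  then have "\<exists>D. (Phi has_real_derivative D) (at x)"
  proof cases
    case 3
    have "(Phi has_real_derivative chirp' x) (at x)"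
      by (rule has_field_derivative_transform_within_open[where S = "{0<..<1/2}", of chirp])
         (use 3 chirp_has_real_derivative Phi_eq_chirp in auto)
    then show ?thesis ..
  next
    case 5
    have "(Phi has_real_derivative chirp' (1 - x)) (at x)"
      by (rule has_field_derivative_transform_within_open[where S = "{1/2<..<1}", of "\<lambda>y. - chirp (1 - y)"])
         (use 5 chirp_reflect_has_real_derivative Phi_eq_neg_chirp_reflect in auto)
    then show ?thesis ..
  qed (use Phi_has_real_derivative_outside Phi_has_real_derivative_endpoints
         Phi_has_real_derivative_half in blast)+
  then show ?thesis
    using real_differentiable_def by blast
qed

lemma Phi_has_real_derivative: "(Phi has_real_derivative deriv Phi x) (at x)"
  using Phi_differentiable DERIV_deriv_iff_real_differentiable by blast

lemma deriv_Phi_eq_0: "x < 0 \<or> 1 < x \<Longrightarrow> deriv Phi x = 0"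
  by (rule DERIV_imp_deriv[OF Phi_has_real_derivative_outside])

definition PhiI :: "real \<Rightarrow> real \<Rightarrow> real \<Rightarrow> real" where
  "PhiI a b x = Phi ((x - a) / (b - a))"

lemma PhiI_eq_0:
  assumes "a < b" and "x \<le> a \<or> b \<le> x"
  shows "PhiI a b x = 0"
  unfolding PhiI_def using assms by (intro Phi_eq_0) (auto simp: divide_le_0_iff le_divide_eq)

lemma phiI_eq_deriv:
  assumes "a < b"
  shows "phiI a b x = deriv Phi ((x - a) / (b - a)) / (b - a)"
proof (cases "x \<in> {a..b}")
  case False
  then have "(x - a) / (b - a) < 0 \<or> 1 < (x - a) / (b - a)"
    using assms by (auto simp: divide_less_0_iff less_divide_eq)
  then show ?thesis using False by (simp add: phiI_def deriv_Phi_eq_0)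
qed (simp add: phiI_def)

lemma PhiI_has_real_derivative:
  assumes "a < b"
  shows "(PhiI a b has_real_derivative phiI a b x) (at x)"
proof -
  have "((\<lambda>y. (y - a) / (b - a)) has_real_derivative 1 / (b - a)) (at x)"
    using assms by (auto intro!: derivative_eq_intros)
  from DERIV_chain2[OF Phi_has_real_derivative this] show ?thesis
    using assms by (simp add: phiI_eq_deriv PhiI_def[abs_def])
qed

lemma phiI_has_integral:
  assumes "a < b" and "u \<le> a" and "u \<le> x"
  shows "(phiI a b has_integral PhiI a b x) {u..x}"
proof -
  have "(phiI a b has_integral PhiI a b x - PhiI a b u) {u..x}"
    using assms PhiI_has_real_derivative
    by (intro fundamental_theorem_of_calculus)
       (auto simp: has_real_derivative_iff_has_vector_derivative[symmetric] has_field_derivative_at_within)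
  then show ?thesis using assms by (simp add: PhiI_eq_0)
qed

definition Phi_peak :: "nat \<Rightarrow> real" where
  "Phi_peak n = sqrt (1 / (2 * (2 * real n + 3)))"

lemma Phi_peak_pos: "0 < Phi_peak n"
  by (simp add: Phi_peak_def)

lemma Phi_peak_le_half: "Phi_peak n \<le> 1/2"
proof -
  have "Phi_peak n \<le> sqrt ((1/2)\<^sup>2)"
    unfolding Phi_peak_def by (rule real_sqrt_le_mono) (simp add: power2_eq_square field_simps)
  then show ?thesis by simp
qed

lemma Phi_peak_Suc_le: "Phi_peak (Suc n) \<le> Phi_peak n"
  unfolding Phi_peak_def by (rule real_sqrt_le_mono) (simp add: field_simps)

lemma Phi_Phi_peak: "Phi (Phi_peak n) = (-1) ^ Suc n * (2 / (2 * real n + 3))"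
proof -
  have sq: "4 * (Phi_peak n)\<^sup>2 = 2 / (2 * real n + 3)"
    unfolding Phi_peak_def by (simp add: field_simps)
  have "pi / (4 * (Phi_peak n)\<^sup>2) = real (Suc n) * pi + pi / 2"
    unfolding sq by (simp add: field_simps)
  then have "sin (pi / (4 * (Phi_peak n)\<^sup>2)) = (-1) ^ Suc n"
    by (simp add: sin_add sin_npi cos_npi del: of_nat_Suc)
  then show ?thesis
    using Phi_peak_pos[of n] Phi_peak_le_half[of n] by (simp add: Phi_def sq)
qed

lemma Phi_peak_oscillation: "inverse (real (Suc n)) \<le> \<bar>Phi (Phi_peak n) - Phi (Phi_peak (Suc n))\<bar>"
proof -
  have "Phi (Phi_peak n) - Phi (Phi_peak (Suc n))
      = (-1) ^ Suc n * (2 / (2 * real n + 3) + 2 / (2 * real n + 5))"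
    by (simp add: Phi_Phi_peak field_simps)
  then have "\<bar>Phi (Phi_peak n) - Phi (Phi_peak (Suc n))\<bar> = 2 / (2 * real n + 3) + 2 / (2 * real n + 5)"
    by (simp add: abs_mult)
  moreover have "inverse (real (Suc n)) \<le> 2 / (2 * real n + 3) + 2 / (2 * real n + 5)"
    by (simp add: divide_simps) (simp add: algebra_simps)
  ultimately show ?thesis by simp
qed

definition PhiI_peak :: "real \<Rightarrow> real \<Rightarrow> nat \<Rightarrow> real" where
  "PhiI_peak a b n = a + (b - a) * Phi_peak n"

lemma PhiI_peak_mem:
  assumes "a \<le> b"
  shows "PhiI_peak a b n \<in> {a..b}"
proof -
  have "(b - a) * Phi_peak n \<le> (b - a) * 1"
    using assms Phi_peak_le_half[of n] by (intro mult_left_mono) auto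
  then show ?thesis
    using assms Phi_peak_pos[of n] by (simp add: PhiI_peak_def)
qed

lemma PhiI_peak_Suc_le: "a \<le> b \<Longrightarrow> PhiI_peak a b (Suc n) \<le> PhiI_peak a b n"
  using Phi_peak_Suc_le[of n] by (simp add: PhiI_peak_def mult_left_mono)

lemma PhiI_PhiI_peak: "a < b \<Longrightarrow> PhiI a b (PhiI_peak a b n) = Phi (Phi_peak n)"
  by (simp add: PhiI_def PhiI_peak_def)

lemma absolutely_integrable_variation_le:
  fixes f :: "real \<Rightarrow> real" and x :: "nat \<Rightarrow> real"
  assumes f: "f absolutely_integrable_on {a..b}"
    and x: "\<And>n. x n \<in> {a..b}" and x_dec: "\<And>n. x (Suc n) \<le> x n"
  shows "(\<Sum>n<N. \<bar>integral {a..x n} f - integral {a..x (Suc n)} f\<bar>) \<le> integral {a..b} (\<lambda>t. \<bar>f t\<bar>)"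
proof -
  have fi: "f integrable_on {u..v}" and afi: "(\<lambda>t. \<bar>f t\<bar>) integrable_on {u..v}"
    if "a \<le> u" "v \<le> b" for u v
    using f that by (auto simp: absolutely_integrable_on_def intro: integrable_on_subinterval)
  have x_le: "x m \<le> x n" if "n \<le> m" for n m
    using that by (induction m rule: dec_induct) (auto intro: order_trans[OF x_dec])
  have step: "\<bar>integral {a..x n} f - integral {a..x (Suc n)} f\<bar> \<le> integral {x (Suc n)..x n} (\<lambda>t. \<bar>f t\<bar>)" for n
  proof -
    have "integral {a..x (Suc n)} f + integral {x (Suc n)..x n} f = integral {a..x n} f"
      using x[of n] x[of "Suc n"] x_dec[of n] by (intro Henstock_Kurzweil_Integration.integral_combine fi) auto
    then have "\<bar>integral {a..x n} f - integral {a..x (Suc n)} f\<bar> = norm (integral {x (Suc n)..x n} f)"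
      by auto
    also have "\<dots> \<le> integral {x (Suc n)..x n} (\<lambda>t. \<bar>f t\<bar>)"
      using x[of n] x[of "Suc n"] by (intro integral_norm_bound_integral fi afi) auto
    finally show ?thesis .
  qed
  have telescope: "(\<Sum>n<N. \<bar>integral {a..x n} f - integral {a..x (Suc n)} f\<bar>) \<le> integral {x N..x 0} (\<lambda>t. \<bar>f t\<bar>)"
  proof (induction N)
    case 0
    show ?case using x[of 0] by (simp add: integral_nonneg afi)
  next
    case (Suc N)
    have "integral {x (Suc N)..x N} (\<lambda>t. \<bar>f t\<bar>) + integral {x N..x 0} (\<lambda>t. \<bar>f t\<bar>)
        = integral {x (Suc N)..x 0} (\<lambda>t. \<bar>f t\<bar>)"
      using x[of 0] x[of "Suc N"] x_dec[of N] x_le[of 0 N] by (intro Henstock_Kurzweil_Integration.integral_combine afi) auto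
    then show ?case using Suc step[of N] by simp
  qed
  also have "integral {x N..x 0} (\<lambda>t. \<bar>f t\<bar>) \<le> integral {a..b} (\<lambda>t. \<bar>f t\<bar>)"
    using x[of 0] x[of N] by (intro integral_subset_le afi) auto
  finally show ?thesis .
qed

lemma PhiI_multiple_primitive_absolutely_integrable_imp_0:
  fixes f :: "real \<Rightarrow> real"
  assumes f: "f absolutely_integrable_on {0..1}" and ab: "0 \<le> a" "a < b" "b \<le> 1"
    and primitive: "\<And>x. x \<in> {a..b} \<Longrightarrow> integral {0..x} f = d * PhiI a b x"
  shows "d = 0"
proof (rule ccontr)
  assume "d \<noteq> 0"
  define x where "x = PhiI_peak a b"
  have x_mem: "x n \<in> {a..b}" for n
    using ab PhiI_peak_mem[of a b] by (simp add: x_def)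
  have x_01: "x n \<in> {0..1}" and x_dec: "x (Suc n) \<le> x n" for n
    using ab x_mem[of n] PhiI_peak_Suc_le[of a b n] by (auto simp: x_def)
  have primitive_x: "integral {0..x n} f = d * Phi (Phi_peak n)" for n
    using primitive[OF x_mem[of n]] ab by (simp add: x_def PhiI_PhiI_peak)
  have "\<bar>d\<bar> * harm N \<le> integral {0..1} (\<lambda>t. \<bar>f t\<bar>)" for N
  proof -
    have "\<bar>d\<bar> * harm N \<le> (\<Sum>n<N. \<bar>d\<bar> * \<bar>Phi (Phi_peak n) - Phi (Phi_peak (Suc n))\<bar>)"
      unfolding harm_altdef sum_distrib_left by (intro sum_mono mult_left_mono Phi_peak_oscillation) auto
    also have "\<dots> = (\<Sum>n<N. \<bar>integral {0..x n} f - integral {0..x (Suc n)} f\<bar>)"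
      by (simp add: primitive_x abs_mult[symmetric] right_diff_distrib)
    also have "\<dots> \<le> integral {0..1} (\<lambda>t. \<bar>f t\<bar>)"
      using x_01 x_dec by (intro absolutely_integrable_variation_le f)
    finally show ?thesis .
  qed
  then have "harm N \<le> integral {0..1} (\<lambda>t. \<bar>f t\<bar>) / \<bar>d\<bar>" for N
    using \<open>d \<noteq> 0\<close> by (simp add: field_simps mult.commute)
  moreover have "\<forall>\<^sub>F N in sequentially. integral {0..1} (\<lambda>t. \<bar>f t\<bar>) / \<bar>d\<bar> < harm N"
    using harm_at_top filterlim_at_top_dense by blast
  ultimately show False
    by (metis (no_types, lifting) eventually_sequentially le_refl linorder_not_le)
qed

lemma bdd_above_abs_primitive:
  fixes f :: "real \<Rightarrow> real"
  assumes "f integrable_on {0..1}"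
  shows "bdd_above ((\<lambda>x. \<bar>integral {0..x} f\<bar>) ` {0..1})"
proof -
  have "continuous_on {0..1} (\<lambda>x. \<bar>integral {0..x} f\<bar>)"
    using indefinite_integral_continuous_1[OF assms] by (intro continuous_intros)
  then have "compact ((\<lambda>x. \<bar>integral {0..x} f\<bar>) ` {0..1})"
    by (intro compact_continuous_image) auto
  then show ?thesis by (intro bounded_imp_bdd_above compact_imp_bounded)
qed

lemma abs_integral_le_alex_norm:
  fixes f :: "real \<Rightarrow> real"
  assumes "f integrable_on {0..1}" and "x \<in> {0..1}"
  shows "\<bar>integral {0..x} f\<bar> \<le> alex_norm f"
  unfolding alex_norm_def using assms by (intro cSUP_upper bdd_above_abs_primitive)

lemma alex_norm_le:
  assumes "\<And>x. x \<in> {0..1} \<Longrightarrow> \<bar>integral {0..x} f\<bar> \<le> K"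
  shows "alex_norm f \<le> K"
  unfolding alex_norm_def using assms by (intro cSUP_least) auto

lemma alex_norm_zero: "alex_norm (\<lambda>x. 0) = 0"
  by (simp add: alex_norm_def)

lemma alex_norm_add_le:
  fixes f g :: "real \<Rightarrow> real"
  assumes "f integrable_on {0..1}" and "g integrable_on {0..1}"
  shows "alex_norm (\<lambda>x. f x + g x) \<le> alex_norm f + alex_norm g"
proof (rule alex_norm_le)
  fix x :: real
  assume x: "x \<in> {0..1}"
  then have "integral {0..x} (\<lambda>x. f x + g x) = integral {0..x} f + integral {0..x} g"
    using assms by (intro integral_add) (auto intro: integrable_on_subinterval)
  then show "\<bar>integral {0..x} (\<lambda>x. f x + g x)\<bar> \<le> alex_norm f + alex_norm g"
    using abs_integral_le_alex_norm[OF assms(1) x] abs_integral_le_alex_norm[OF assms(2) x] by linarith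
qed

lemma alex_norm_scale_le:
  fixes f :: "real \<Rightarrow> real"
  assumes "f integrable_on {0..1}"
  shows "alex_norm (\<lambda>x. c * f x) \<le> \<bar>c\<bar> * alex_norm f"
  using abs_integral_le_alex_norm[OF assms]
  by (intro alex_norm_le) (simp add: abs_mult mult_left_mono)

lemma abs_integral_diff_le_alex_norm:
  fixes f g :: "real \<Rightarrow> real"
  assumes "f integrable_on {0..1}" and "g integrable_on {0..1}" and x: "x \<in> {0..1}"
  shows "\<bar>integral {0..x} f - integral {0..x} g\<bar> \<le> alex_norm (\<lambda>x. f x - g x)"
proof -
  have "integral {0..x} (\<lambda>x. f x - g x) = integral {0..x} f - integral {0..x} g"
    using assms by (intro integral_diff) (auto intro: integrable_on_subinterval)
  then show ?thesis
    using abs_integral_le_alex_norm[of "\<lambda>x. f x - g x", OF integrable_diff[OF assms(1,2)] x] by simp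
qed

definition alex_closure :: "(real \<Rightarrow> real) set \<Rightarrow> (real \<Rightarrow> real) set" where
  "alex_closure A = {f. f integrable_on {0..1} \<and> (\<forall>e>0. \<exists>g\<in>A. alex_norm (\<lambda>x. f x - g x) < e)}"

lemma alex_closure_integrable: "f \<in> alex_closure A \<Longrightarrow> f integrable_on {0..1}"
  by (simp add: alex_closure_def)

lemma alex_closureE:
  assumes "f \<in> alex_closure A" and "e > 0"
  obtains g where "g \<in> A" and "alex_norm (\<lambda>x. f x - g x) < e"
  using assms by (auto simp: alex_closure_def)

lemma subset_alex_closure:
  assumes "\<And>g. g \<in> A \<Longrightarrow> g integrable_on {0..1}"
  shows "A \<subseteq> alex_closure A"
proof
  fix g assume "g \<in> A"
  then show "g \<in> alex_closure A"
    using assms alex_norm_zero by (auto simp: alex_closure_def intro!: bexI[of _ g])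
qed

lemma alex_closure_alex_closure:
  assumes A: "\<And>g. g \<in> A \<Longrightarrow> g integrable_on {0..1}"
  shows "alex_closure (alex_closure A) = alex_closure A"
proof
  show "alex_closure (alex_closure A) \<subseteq> alex_closure A"
  proof
    fix f assume f: "f \<in> alex_closure (alex_closure A)"
    have "\<exists>h\<in>A. alex_norm (\<lambda>x. f x - h x) < e" if "e > 0" for e
    proof -
      obtain g where g: "g \<in> alex_closure A" "alex_norm (\<lambda>x. f x - g x) < e/2"
        using alex_closureE[OF f half_gt_zero[OF \<open>e > 0\<close>]] by blast
      obtain h where h: "h \<in> A" "alex_norm (\<lambda>x. g x - h x) < e/2"
        using alex_closureE[OF g(1) half_gt_zero[OF \<open>e > 0\<close>]] by blast
      have "alex_norm (\<lambda>x. (f x - g x) + (g x - h x)) \<le> alex_norm (\<lambda>x. f x - g x) + alex_norm (\<lambda>x. g x - h x)"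
        using f g(1) h(1) A by (intro alex_norm_add_le integrable_diff) (auto simp: alex_closure_def)
      then show ?thesis using g(2) h by (intro bexI[OF _ h(1)]) simp
    qed
    then show "f \<in> alex_closure A" using f by (simp add: alex_closure_def)
  qed
  show "alex_closure A \<subseteq> alex_closure (alex_closure A)"
    by (rule subset_alex_closure) (simp add: alex_closure_def)
qed

lemma alex_closure_add:
  assumes A: "\<And>g. g \<in> A \<Longrightarrow> g integrable_on {0..1}"
    and A_add: "\<And>g h. g \<in> A \<Longrightarrow> h \<in> A \<Longrightarrow> (\<lambda>x. g x + h x) \<in> A"
    and f: "f \<in> alex_closure A" and f': "f' \<in> alex_closure A"
  shows "(\<lambda>x. f x + f' x) \<in> alex_closure A"
proof -
  have "\<exists>h\<in>A. alex_norm (\<lambda>x. (f x + f' x) - h x) < e" if "e > 0" for e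
  proof -
    obtain g where g: "g \<in> A" "alex_norm (\<lambda>x. f x - g x) < e/2"
      using alex_closureE[OF f half_gt_zero[OF \<open>e > 0\<close>]] by blast
    obtain g' where g': "g' \<in> A" "alex_norm (\<lambda>x. f' x - g' x) < e/2"
      using alex_closureE[OF f' half_gt_zero[OF \<open>e > 0\<close>]] by blast
    have "alex_norm (\<lambda>x. (f x - g x) + (f' x - g' x)) \<le> alex_norm (\<lambda>x. f x - g x) + alex_norm (\<lambda>x. f' x - g' x)"
      using f f' g g' A by (intro alex_norm_add_le integrable_diff) (auto simp: alex_closure_def)
    then show ?thesis
      using g g' A_add[OF g(1) g'(1)] by (intro bexI[OF _ A_add[OF g(1) g'(1)]]) (simp add: algebra_simps)
  qed
  then show ?thesis
    using f f' by (auto simp: alex_closure_def intro: integrable_add)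
qed

lemma alex_closure_scale:
  assumes A: "\<And>g. g \<in> A \<Longrightarrow> g integrable_on {0..1}"
    and A_scale: "\<And>g c. g \<in> A \<Longrightarrow> (\<lambda>x. c * g x) \<in> A"
    and f: "f \<in> alex_closure A"
  shows "(\<lambda>x. c * f x) \<in> alex_closure A"
proof -
  have "\<exists>h\<in>A. alex_norm (\<lambda>x. c * f x - h x) < e" if "e > 0" for e
  proof -
    have e': "e / (\<bar>c\<bar> + 1) > 0" using \<open>e > 0\<close> by simp
    obtain g where g: "g \<in> A" "alex_norm (\<lambda>x. f x - g x) < e / (\<bar>c\<bar> + 1)"
      using f e' by (rule alex_closureE)
    have "alex_norm (\<lambda>x. c * (f x - g x)) \<le> \<bar>c\<bar> * alex_norm (\<lambda>x. f x - g x)"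
      using f g A by (intro alex_norm_scale_le integrable_diff) (auto simp: alex_closure_def)
    also have "\<dots> \<le> \<bar>c\<bar> * (e / (\<bar>c\<bar> + 1))"
      using g(2) by (intro mult_left_mono) auto
    also have "\<dots> < e"
      using \<open>e > 0\<close> by (simp add: field_simps)
    finally show ?thesis
      by (intro bexI[OF _ A_scale[OF g(1)]]) (simp add: right_diff_distrib)
  qed
  then show ?thesis
    using f by (auto simp: alex_closure_def intro: integrable_on_mult_right)
qed

lemma K_zero_has_integral_0:
  fixes f :: "real \<Rightarrow> real"
  assumes "K_zero f" and "x \<in> {0..1}"
  shows "(f has_integral 0) {0..x}"
proof -
  obtain N where N: "N \<in> null_sets lebesgue" "\<And>y. y \<notin> N \<Longrightarrow> y \<in> {0..1} \<Longrightarrow> f y = 0"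
    using assms(1) unfolding K_zero_def by (auto elim!: AE_E3)
  show ?thesis
    using N assms(2)
    by (intro has_integral_spike[of N "{0..x}" f "\<lambda>_. 0"]) (auto simp: negligible_iff_null_sets)
qed

lemma K_zero_if_primitive_0:
  fixes f :: "real \<Rightarrow> real"
  assumes f: "f integrable_on {0..1}" and F0: "\<And>x. x \<in> {0..1} \<Longrightarrow> integral {0..x} f = 0"
  shows "K_zero f"
proof -
  define g where "g x = (if x \<in> {0..1} then f x else 0)" for x
  have "g integrable_on UNIV"
    unfolding g_def using f integrable_restrict_UNIV by blast
  then have "g integrable_on cbox a b" for a b :: real
    by (rule integrable_on_subcbox) auto
  then obtain N where N: "negligible N"
    and lebesgue_pt: "\<And>x e. \<lbrakk>x \<notin> N; 0 < e\<rbrakk> \<Longrightarrow> \<exists>d>0. \<forall>h. 0 < h \<and> h < d \<longrightarrow>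
        norm (integral (cbox x (x + h *\<^sub>R One)) g /\<^sub>R h ^ DIM(real) - g x) < e"
    using integrable_ccontinuous_explicit[of g] by blast
  have "f x = 0" if x: "x \<in> {0..<1}" "x \<notin> N" for x
  proof (rule ccontr)
    assume "f x \<noteq> 0"
    then obtain d where d: "d > 0" "\<forall>h. 0 < h \<and> h < d \<longrightarrow>
        norm (integral (cbox x (x + h *\<^sub>R One)) g /\<^sub>R h ^ DIM(real) - g x) < \<bar>f x\<bar>"
      using lebesgue_pt[OF x(2), of "\<bar>f x\<bar>"] by auto
    define h where "h = min (d/2) (1 - x)"
    have h: "0 < h" "h < d" "x + h \<le> 1" using d x by (auto simp: h_def)
    have "integral {x..x+h} g = integral {x..x+h} f"
      using x h by (intro integral_cong) (auto simp: g_def)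
    also have "\<dots> = integral {0..x+h} f - integral {0..x} f"
      using Henstock_Kurzweil_Integration.integral_combine[of 0 x "x+h" f] x h
        integrable_on_subinterval[OF f, of 0 "x+h"] by auto
    also have "\<dots> = 0" using F0[of x] F0[of "x+h"] x h by auto
    finally have "norm (0 - f x) < \<bar>f x\<bar>"
      using d(2)[rule_format, of h] h x by (simp add: cbox_interval g_def)
    then show False by simp
  qed
  moreover have "insert 1 N \<in> null_sets lebesgue"
    using N by (simp add: negligible_iff_null_sets)
  ultimately show ?thesis
    unfolding K_zero_def by (intro AE_I'[of "insert 1 N"]) force+
qed

lemma Ik_lo_pos: "0 < Ik_lo k"
  by (simp add: Ik_lo_def)

lemma Ik_lo_less_Ik_hi: "Ik_lo k < Ik_hi k"
  by (simp add: Ik_lo_def Ik_hi_def)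

lemma Ik_hi_le_1: "Ik_hi k \<le> 1"
  by (simp add: Ik_hi_def power_le_one)

lemma Ik_hi_le_Ik_lo: "j < k \<Longrightarrow> Ik_hi k \<le> Ik_lo j"
  unfolding Ik_lo_def Ik_hi_def by (rule power_decreasing) auto

lemma Ik_subset_01: "x \<in> {Ik_lo k..Ik_hi k} \<Longrightarrow> x \<in> {0..1}"
  using Ik_lo_pos[of k] Ik_hi_le_1[of k] by auto

lemma Ik_cover:
  assumes "0 < x" and "x \<le> 1"
  shows "\<exists>j. x \<in> {Ik_lo j..Ik_hi j}"
proof -
  obtain m where "(1/2::real) ^ m < x"
    using real_arch_pow_inv[of x "1/2"] assms by auto
  moreover have "(1/2::real) ^ Suc m \<le> (1/2) ^ m"
    by (rule power_decreasing) auto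
  ultimately have ex: "\<exists>n. (1/2::real) ^ Suc n \<le> x" by (intro exI[of _ m]) linarith
  define n where "n = (LEAST n. (1/2::real) ^ Suc n \<le> x)"
  have "(1/2::real) ^ Suc n \<le> x"
    unfolding n_def using ex by (rule LeastI_ex)
  moreover have "x \<le> (1/2) ^ n"
  proof (cases n)
    case (Suc k)
    then have "\<not> (1/2::real) ^ Suc k \<le> x"
      using not_less_Least[of k "\<lambda>n. (1/2::real) ^ Suc n \<le> x"] by (simp add: n_def)
    then show ?thesis using Suc by simp
  qed (use assms in simp)
  ultimately show ?thesis by (auto simp: Ik_lo_def Ik_hi_def)
qed

abbreviation phik :: "nat \<Rightarrow> real \<Rightarrow> real" where
  "phik k \<equiv> phiI (Ik_lo k) (Ik_hi k)"

abbreviation Phik :: "nat \<Rightarrow> real \<Rightarrow> real" where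
  "Phik k \<equiv> PhiI (Ik_lo k) (Ik_hi k)"

definition phi_span :: "(real \<Rightarrow> real) set" where
  "phi_span = {(\<lambda>x. \<Sum>k<n. c k * phik k x) | n c. True}"

lemma mem_phi_span: "(\<lambda>x. \<Sum>k<n. c k * phik k x) \<in> phi_span"
  by (auto simp: phi_span_def)

lemma Phik_eq_0:
  assumes "x \<in> {Ik_lo j..Ik_hi j}" and "k \<noteq> j"
  shows "Phik k x = 0"
proof (rule PhiI_eq_0[OF Ik_lo_less_Ik_hi])
  show "x \<le> Ik_lo k \<or> Ik_hi k \<le> x"
    using assms Ik_hi_le_Ik_lo[of k j] Ik_hi_le_Ik_lo[of j k] by (cases "k < j") auto
qed

lemma sum_Phik_on_Ik:
  assumes "x \<in> {Ik_lo j..Ik_hi j}"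
  shows "(\<Sum>k<n. c k * Phik k x) = (if j < n then c j else 0) * Phik j x"
proof -
  have "(\<Sum>k<n. c k * Phik k x) = (\<Sum>k<n. if k = j then c j * Phik j x else 0)"
    using Phik_eq_0[OF assms] by (intro sum.cong) auto
  then show ?thesis by simp
qed

lemma phik_sum_has_integral:
  assumes "0 \<le> x"
  shows "((\<lambda>y. \<Sum>k<n. c k * phik k y) has_integral (\<Sum>k<n. c k * Phik k x)) {0..x}"
  using assms Ik_lo_pos Ik_lo_less_Ik_hi
  by (intro has_integral_sum has_integral_mult_right phiI_has_integral) (auto intro: less_imp_le)

lemma phi_span_integrable: "g \<in> phi_span \<Longrightarrow> g integrable_on {0..1}"
  using phik_sum_has_integral[of 1] by (auto simp: phi_span_def)

lemma phi_span_add: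
  assumes "g \<in> phi_span" and "h \<in> phi_span"
  shows "(\<lambda>x. g x + h x) \<in> phi_span"
proof -
  obtain n c m d where gh: "g = (\<lambda>x. \<Sum>k<n. c k * phik k x)" "h = (\<lambda>x. \<Sum>k<m. d k * phik k x)"
    using assms by (auto simp: phi_span_def)
  have pad: "(\<Sum>k<p. e k * phik k x) = (\<Sum>k<max p q. (if k < p then e k else 0) * phik k x)"
    for p q and e :: "nat \<Rightarrow> real" and x
    by (rule sum.mono_neutral_cong_left) auto
  have "(\<lambda>x. g x + h x)
      = (\<lambda>x. \<Sum>k<max n m. ((if k < n then c k else 0) + (if k < m then d k else 0)) * phik k x)"
    unfolding gh pad[where p=n and q=m] pad[where p=m and q=n]
    by (simp add: max.commute distrib_right sum.distrib)
  then show ?thesis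
    by (simp only: mem_phi_span)
qed

lemma phi_span_scale: "g \<in> phi_span \<Longrightarrow> (\<lambda>x. a * g x) \<in> phi_span"
  unfolding phi_span_def
  by (auto simp: sum_distrib_left mult.assoc intro!: exI[of _ "\<lambda>k. a * _ k"])

lemma phik_in_phi_span: "phik j \<in> phi_span"
proof -
  have "phik j = (\<lambda>x. \<Sum>k<Suc j. (if k = j then 1 else 0) * phik k x)"
    by (simp add: if_distrib cong: if_cong)
  then show ?thesis
    by (simp only: mem_phi_span)
qed

lemma phi_span_primitive_on_Ik:
  assumes "g \<in> phi_span"
  shows "\<exists>c. \<forall>x\<in>{Ik_lo j..Ik_hi j}. integral {0..x} g = c * Phik j x"
proof -
  obtain n c where g: "g = (\<lambda>x. \<Sum>k<n. c k * phik k x)"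
    using assms by (auto simp: phi_span_def)
  have "integral {0..x} g = (if j < n then c j else 0) * Phik j x" if "x \<in> {Ik_lo j..Ik_hi j}" for x
    using that Ik_subset_01 phik_sum_has_integral[where x=x and n=n and c=c] sum_Phik_on_Ik[OF that]
    by (auto simp: g intro!: integral_unique)
  then show ?thesis by blast
qed

lemma eq_multiple_if_approx_by_multiples:
  fixes G P :: "'a \<Rightarrow> real"
  assumes Pt: "P t \<noteq> 0"
    and approx: "\<And>e. e > 0 \<Longrightarrow> \<exists>c. \<bar>G t - c * P t\<bar> < e \<and> \<bar>G x - c * P x\<bar> < e"
  shows "G x = G t / P t * P x"
proof (rule ccontr)
  define d where "d = G t / P t"
  define K where "K = 1 + \<bar>P x\<bar> / \<bar>P t\<bar>"
  define e where "e = \<bar>G x - d * P x\<bar> / K"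
  assume "G x \<noteq> G t / P t * P x"
  moreover have K: "K > 0" by (simp add: K_def add_pos_nonneg)
  ultimately have "e > 0" by (simp add: e_def d_def)
  then obtain c where c: "\<bar>G t - c * P t\<bar> < e" "\<bar>G x - c * P x\<bar> < e"
    using approx by blast
  have "\<bar>d - c\<bar> * \<bar>P t\<bar> = \<bar>G t - c * P t\<bar>"
    using Pt by (simp add: d_def flip: abs_mult) (simp add: algebra_simps)
  then have "\<bar>d - c\<bar> < e / \<bar>P t\<bar>"
    using c(1) Pt by (simp add: pos_less_divide_eq)
  then have dc: "\<bar>d - c\<bar> * \<bar>P x\<bar> \<le> e / \<bar>P t\<bar> * \<bar>P x\<bar>"
    by (intro mult_right_mono) auto
  have "G x - d * P x = (G x - c * P x) - (d - c) * P x"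
    by (simp add: algebra_simps)
  then have "\<bar>G x - d * P x\<bar> \<le> \<bar>G x - c * P x\<bar> + \<bar>d - c\<bar> * \<bar>P x\<bar>"
    by (metis abs_triangle_ineq4 abs_mult)
  also have "\<dots> < e + e / \<bar>P t\<bar> * \<bar>P x\<bar>"
    using c(2) dc by linarith
  also have "\<dots> = e * K"
    by (simp add: K_def algebra_simps)
  also have "\<dots> = \<bar>G x - d * P x\<bar>"
    using K by (simp add: e_def)
  finally show False by simp
qed

lemma ex_Phik_nonzero: "\<exists>t\<in>{Ik_lo j..Ik_hi j}. Phik j t \<noteq> 0"
  using PhiI_peak_mem[of "Ik_lo j" "Ik_hi j" 0] PhiI_PhiI_peak[OF Ik_lo_less_Ik_hi, of j 0]
    Ik_lo_less_Ik_hi[of j] by (intro bexI[of _ "PhiI_peak (Ik_lo j) (Ik_hi j) 0"]) (auto simp: Phi_Phi_peak)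

lemma alex_closure_phi_span_primitive_on_Ik:
  assumes f: "f \<in> alex_closure phi_span"
  shows "\<exists>d. \<forall>x\<in>{Ik_lo j..Ik_hi j}. integral {0..x} f = d * Phik j x"
proof -
  obtain t where t: "t \<in> {Ik_lo j..Ik_hi j}" "Phik j t \<noteq> 0"
    using ex_Phik_nonzero by blast
  have "integral {0..x} f = integral {0..t} f / Phik j t * Phik j x"
    if x: "x \<in> {Ik_lo j..Ik_hi j}" for x
  proof (rule eq_multiple_if_approx_by_multiples[where G = "\<lambda>x. integral {0..x} f" and P = "Phik j", OF t(2)])
    fix e :: real
    assume "e > 0"
    then obtain g where g: "g \<in> phi_span" "alex_norm (\<lambda>x. f x - g x) < e"
      by (rule alex_closureE[OF f])
    obtain c where c: "\<forall>y\<in>{Ik_lo j..Ik_hi j}. integral {0..y} g = c * Phik j y"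
      using phi_span_primitive_on_Ik[OF g(1)] by blast
    have "\<bar>integral {0..y} f - c * Phik j y\<bar> < e" if "y \<in> {Ik_lo j..Ik_hi j}" for y
      using abs_integral_diff_le_alex_norm[OF alex_closure_integrable[OF f]
          phi_span_integrable[OF g(1)] Ik_subset_01[OF that]] c that g(2)
      by auto
    then show "\<exists>c. \<bar>integral {0..t} f - c * Phik j t\<bar> < e \<and> \<bar>integral {0..x} f - c * Phik j x\<bar> < e"
      using t(1) x by blast
  qed
  then show ?thesis by blast
qed

lemma alex_closure_phi_span_KJ_or_K_zero:
  assumes f: "f \<in> alex_closure phi_span"
  shows "KJ f \<or> K_zero f"
proof (cases "KJ f")
  case False
  then have f_abs: "f absolutely_integrable_on {0..1}"
    using alex_closure_integrable[OF f] by (simp add: KJ_def)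
  have "integral {0..x} f = 0" if x01: "x \<in> {0..1}" for x
  proof (cases "x = 0")
    case False
    then obtain j where x: "x \<in> {Ik_lo j..Ik_hi j}"
      using Ik_cover[of x] x01 by fastforce
    obtain d where d: "\<forall>y\<in>{Ik_lo j..Ik_hi j}. integral {0..y} f = d * Phik j y"
      using alex_closure_phi_span_primitive_on_Ik[OF f] by blast
    have "d = 0"
      by (rule PhiI_multiple_primitive_absolutely_integrable_imp_0[OF f_abs
            less_imp_le[OF Ik_lo_pos] Ik_lo_less_Ik_hi Ik_hi_le_1])
         (use d in auto)
    then show ?thesis using d x by simp
  qed simp
  then show ?thesis
    by (intro disjI2 K_zero_if_primitive_0 alex_closure_integrable[OF f])
qed simp

lemma phik_linearly_independent:
  assumes "K_zero (\<lambda>x. \<Sum>k<n. c k * phik k x)" and "j < n"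
  shows "c j = 0"
proof -
  obtain t where t: "t \<in> {Ik_lo j..Ik_hi j}" "Phik j t \<noteq> 0"
    using ex_Phik_nonzero by blast
  have t01: "t \<in> {0..1}"
    using Ik_subset_01[OF t(1)] .
  then have "(\<Sum>k<n. c k * Phik k t) = 0"
    using has_integral_unique[OF phik_sum_has_integral[where x = t and n = n and c = c]
        K_zero_has_integral_0[OF assms(1) t01]] by simp
  then show ?thesis
    using sum_Phik_on_Ik[OF t(1)] t(2) assms(2) by simp
qed

lemma mem_alex_closure_phi_span_iff:
  "f \<in> alex_closure phi_span \<longleftrightarrow> f integrable_on {0..1} \<and>
     (\<forall>e>0. \<exists>n c. alex_norm (\<lambda>x. f x - (\<Sum>k<n. c k * phik k x)) < e)"
  by (simp add: alex_closure_def phi_span_def) blast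

lemma spaceable_K_if_alex_closure:
  assumes A: "\<And>g. g \<in> A \<Longrightarrow> g integrable_on {0..1}"
    and A_zero: "(\<lambda>x. 0) \<in> A"
    and A_add: "\<And>g h. g \<in> A \<Longrightarrow> h \<in> A \<Longrightarrow> (\<lambda>x. g x + h x) \<in> A"
    and A_scale: "\<And>g c. g \<in> A \<Longrightarrow> (\<lambda>x. c * g x) \<in> A"
    and independent: "\<And>n. \<exists>fs :: nat \<Rightarrow> real \<Rightarrow> real. (\<forall>i<n. fs i \<in> A) \<and>
      (\<forall>c. K_zero (\<lambda>x. \<Sum>i<n. c i * fs i x) \<longrightarrow> (\<forall>i<n. c i = 0))"
    and S: "\<And>f. f \<in> alex_closure A \<Longrightarrow> S f \<or> K_zero f"
  shows "spaceable_K S"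
  unfolding spaceable_K_def
proof (intro exI[of _ "alex_closure A"] conjI)
  have A_sub: "A \<subseteq> alex_closure A"
    using A by (rule subset_alex_closure)
  show "\<forall>f\<in>alex_closure A. f integrable_on {0..1}"
    using alex_closure_integrable by blast
  show "(\<lambda>x. 0) \<in> alex_closure A"
    using A_sub A_zero by blast
  show "\<forall>f\<in>alex_closure A. \<forall>g\<in>alex_closure A. (\<lambda>x. f x + g x) \<in> alex_closure A"
    using alex_closure_add[of A, OF A A_add] by blast
  show "\<forall>f\<in>alex_closure A. \<forall>c. (\<lambda>x. c * f x) \<in> alex_closure A"
    using alex_closure_scale[of A, OF A A_scale] by blast
  show "\<forall>f. f integrable_on {0..1} \<and> (\<forall>e>0. \<exists>g\<in>alex_closure A. alex_norm (\<lambda>x. f x - g x) < e)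
      \<longrightarrow> f \<in> alex_closure A"
  proof (intro allI impI)
    fix f
    assume "f integrable_on {0..1} \<and> (\<forall>e>0. \<exists>g\<in>alex_closure A. alex_norm (\<lambda>x. f x - g x) < e)"
    then have "f \<in> alex_closure (alex_closure A)"
      unfolding alex_closure_def[of "alex_closure A"] mem_Collect_eq .
    then show "f \<in> alex_closure A"
      using alex_closure_alex_closure[of A, OF A] by simp
  qed
  show "\<forall>n. \<exists>fs :: nat \<Rightarrow> real \<Rightarrow> real. (\<forall>i<n. fs i \<in> alex_closure A) \<and>
      (\<forall>c. K_zero (\<lambda>x. \<Sum>i<n. c i * fs i x) \<longrightarrow> (\<forall>i<n. c i = 0))"
  proof
    fix n
    obtain fs :: "nat \<Rightarrow> real \<Rightarrow> real" where "\<forall>i<n. fs i \<in> A"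
      and "\<forall>c. K_zero (\<lambda>x. \<Sum>i<n. c i * fs i x) \<longrightarrow> (\<forall>i<n. c i = 0)"
      using independent[of n] by blast
    with A_sub show "\<exists>fs :: nat \<Rightarrow> real \<Rightarrow> real. (\<forall>i<n. fs i \<in> alex_closure A) \<and>
        (\<forall>c. K_zero (\<lambda>x. \<Sum>i<n. c i * fs i x) \<longrightarrow> (\<forall>i<n. c i = 0))"
      by blast
  qed
  show "\<forall>f\<in>alex_closure A. S f \<or> K_zero f"
    using S by blast
qed

theorem mainTheorem11:
  shows "(\<forall>f. f integrable_on {0..1} \<and>
              (\<forall>e>0. \<exists>n (c :: nat \<Rightarrow> real).
                 alex_norm (\<lambda>x. f x - (\<Sum>k<n. c k * phiI (Ik_lo k) (Ik_hi k) x)) < e)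
           \<longrightarrow> KJ f \<or> K_zero f)
         \<and> spaceable_K KJ"
proof
  show "\<forall>f. f integrable_on {0..1} \<and>
              (\<forall>e>0. \<exists>n (c :: nat \<Rightarrow> real).
                 alex_norm (\<lambda>x. f x - (\<Sum>k<n. c k * phiI (Ik_lo k) (Ik_hi k) x)) < e)
           \<longrightarrow> KJ f \<or> K_zero f"
    using alex_closure_phi_span_KJ_or_K_zero mem_alex_closure_phi_span_iff by blast
  have independent: "\<exists>fs :: nat \<Rightarrow> real \<Rightarrow> real. (\<forall>i<n. fs i \<in> phi_span) \<and>
      (\<forall>c. K_zero (\<lambda>x. \<Sum>i<n. c i * fs i x) \<longrightarrow> (\<forall>i<n. c i = 0))" for n
    using phik_in_phi_span phik_linearly_independent by (intro exI[where x = phik]) auto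
  show "spaceable_K KJ"
  proof (rule spaceable_K_if_alex_closure[of phi_span])
    show "(\<lambda>x. 0) \<in> phi_span"
      using mem_phi_span[where n = 0] by simp
  qed (fact phi_span_integrable phi_span_add phi_span_scale independent
         alex_closure_phi_span_KJ_or_K_zero)+
qed

end
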